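(* There exists a function $F:\mathbb{R}\to\mathbb{R}$ whose graph, as a subspace of $\mathbb{R}^2$, is connected and dense in $\mathbb{R}^2$ and is not homeomorphic to any proper subspace of itself.
   Context: A real function is identified with its graph $\{(x,F(x)):x\in\mathbb{R}\}\subset\mathbb{R}^2$ with the subspace topology of the Euclidean plane. *)

theory Defs
  imports "HOL-Analysis.Analysis"
begin

definition graph_of :: "(real \<Rightarrow> real) \<Rightarrow> (real \<times> real) set" where
  "graph_of F = {(x, F x) | x. True}"

end

theory Submission
  imports Defs
begin

(* F is built by a transfinite recursion of length continuum which at each stage fixes F on
   countably many fresh points; at most a set of size below the continuum has been used before any
   stage, so fresh points are available in every interval. Running through the closed sets K of
   the plane, we make the graph meet K whenever the projection of K contains a nondegenerate
   interval, and, when K is the graph of a continuous injection \<psi> \<noteq> id, we choose x\<^sub>n \<rightarrow> x\<^sub>0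
   with F = 0 at x\<^sub>n, x\<^sub>0 and \<psi> x\<^sub>0, but F (\<psi> x\<^sub>n) = 1.

   The first property gives density, and connectedness: if disjoint open sets U, V separated the
   graph, a component of the closed set -(U \<union> V) would separate two points of the graph; this
   component misses the graph, so its projection is at most one point x\<^sub>0, and the two points are
   joined by a staircase through (x\<^sub>0, F x\<^sub>0) avoiding it.

   A homeomorphism h of the graph onto a proper subset induces \<psi> x = fst (h (x, F x)), which is
   injective and maps intervals onto intervals, hence is continuous; \<psi> \<noteq> id because h is not
   onto, and then the points x\<^sub>n contradict continuity of h at (x\<^sub>0, 0). *)

unbundle cardinal_syntax

section \<open>Sets below the continuum\<close>

definition below_continuum :: "'a set \<Rightarrow> bool" where
  "below_continuum X \<longleftrightarrow> |X| <o |UNIV::real set|"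

lemma countable_ordLeq_nat: "countable X \<Longrightarrow> |X| \<le>o |UNIV::nat set|"
  unfolding countable_def card_of_ordLeq[symmetric] by auto

lemma below_continuum_countable: "countable X \<Longrightarrow> below_continuum X"
proof -
  assume "countable X"
  then have "|X| \<le>o |UNIV::nat set|" by (rule countable_ordLeq_nat)
  also have "\<not> |UNIV::real set| \<le>o |UNIV::nat set|"
    using uncountable_UNIV_real unfolding countable_def card_of_ordLeq[symmetric] by auto
  then have "|UNIV::nat set| <o |UNIV::real set|"
    using not_ordLeq_iff_ordLess[OF card_of_Well_order card_of_Well_order] by blast
  finally show ?thesis unfolding below_continuum_def .
qed

lemma below_continuum_Un:
  "below_continuum X \<Longrightarrow> below_continuum Y \<Longrightarrow> below_continuum (X \<union> Y)"
  unfolding below_continuum_def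
  by (rule card_of_Un_ordLess_infinite) (auto simp: infinite_UNIV_char_0)

lemma below_continuum_vimage: "below_continuum X \<Longrightarrow> inj f \<Longrightarrow> below_continuum (f -` X)"
proof -
  assume "below_continuum X" "inj f"
  then have "|f -` X| \<le>o |X|"
    using card_of_ordLeq[of "f -` X" X] inj_on_subset[OF \<open>inj f\<close>] by blast
  then show ?thesis
    using \<open>below_continuum X\<close> unfolding below_continuum_def by (rule ordLeq_ordLess_trans)
qed

lemma below_continuum_UN:
  assumes J: "below_continuum J" and A: "\<And>i. i \<in> J \<Longrightarrow> countable (A i)"
  shows "below_continuum (\<Union>i\<in>J. A i)"
proof (cases "finite J")
  case True
  then show ?thesis
    using A by (intro below_continuum_countable countable_UN) (auto intro: countable_finite)
next
  case False
  then have "|UNIV::nat set| \<le>o |J|" using infinite_iff_card_of_nat by blast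
  then have "\<forall>i\<in>J. |A i| \<le>o |J|" using A countable_ordLeq_nat ordLeq_transitive by blast
  then have "|\<Union>i\<in>J. A i| \<le>o |J|"
    using card_of_UNION_ordLeq_infinite[OF False card_of_mono1[OF subset_refl]] by blast
  then show ?thesis using J unfolding below_continuum_def by (rule ordLeq_ordLess_trans)
qed

lemma open_subset_below_continuum:
  fixes U :: "real set"
  assumes "open U" "below_continuum E" "U \<subseteq> E"
  shows "U = {}"
proof (rule ccontr)
  assume "U \<noteq> {}"
  then obtain x e where "e > 0" "ball x e \<subseteq> U" using \<open>open U\<close> open_contains_ball by blast
  moreover have "{x - e<..<x + e} \<subseteq> ball x e" by (auto simp: dist_real_def)
  ultimately have "{x - e<..<x + e} \<subseteq> E" using assms(3) by blast
  then have "|{x - e<..<x + e}| \<le>o |E|" by (rule card_of_mono1)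
  moreover have "ordIso2 |UNIV::real set| |{x - e<..<x + e}|"
    using open_interval_eqpoll_reals[of "x - e" "x + e"] \<open>e > 0\<close> eqpoll_iff_card_of_ordIso
      ordIso_symmetric by auto
  ultimately show False
    using assms(2) ordIso_ordLeq_trans not_ordLess_ordLeq unfolding below_continuum_def by blast
qed

lemma islimpt_diff_below_continuum:
  fixes U :: "real set"
  assumes "open U" "x \<in> U" "below_continuum E"
  shows "x islimpt (U - E)"
proof (rule islimptI)
  fix T assume "x \<in> T" "open T"
  have "U \<inter> T \<noteq> {x}"
    using \<open>open T\<close> assms(1) not_open_singleton[of x] by (metis open_Int)
  then have "U \<inter> T - {x} \<noteq> {}"
    using \<open>x \<in> T\<close> assms(2) by blast
  then have "\<not> U \<inter> T - {x} \<subseteq> E"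
    using open_subset_below_continuum[OF _ assms(3)] \<open>open T\<close> assms(1)
    by (meson open_Int open_delete)
  then show "\<exists>y\<in>U - E. y \<in> T \<and> y \<noteq> x" by blast
qed

lemma card_closed_sets_le_continuum:
  "|{K::'a::second_countable_topology set. closed K}| \<le>o |UNIV::real set|"
proof -
  obtain \<B> :: "'a set set"
    where \<B>: "countable \<B>" "\<And>S. open S \<Longrightarrow> \<exists>U. U \<subseteq> \<B> \<and> S = \<Union>U"
    by (rule univ_second_countable) blast
  define code where "code K = to_nat_on \<B> ` {C\<in>\<B>. C \<subseteq> -K}" for K :: "'a set"
  have rep: "-K = \<Union>{C\<in>\<B>. C \<subseteq> -K}" if K: "closed K" for K
  proof -
    obtain U where "U \<subseteq> \<B>" "-K = \<Union>U" using \<B>(2)[of "-K"] open_Compl[OF K] by blast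
    then show ?thesis by blast
  qed
  have "inj_on code {K. closed K}"
  proof (rule inj_onI)
    fix K1 K2 assume "K1 \<in> {K. closed K}" "K2 \<in> {K. closed K}" "code K1 = code K2"
    then have "{C\<in>\<B>. C \<subseteq> -K1} = {C\<in>\<B>. C \<subseteq> -K2}"
      unfolding code_def using inj_on_image_eq_iff[OF inj_on_to_nat_on[OF \<B>(1)]] by blast
    then show "K1 = K2"
      using rep \<open>K1 \<in> _\<close> \<open>K2 \<in> _\<close> by (metis double_complement mem_Collect_eq)
  qed
  then have "|{K::'a set. closed K}| \<le>o |UNIV::nat set set|"
    using card_of_ordLeq by blast
  also have "ordIso2 |UNIV::nat set set| |UNIV::real set|"
    using nat_sets_eqpoll_reals eqpoll_iff_card_of_ordIso by blast
  finally show ?thesis .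
qed

section \<open>Forcing with countable partial functions\<close>

definition forces :: "('a \<Rightarrow> 'b option) \<Rightarrow> (('a \<Rightarrow> 'b) \<Rightarrow> bool) \<Rightarrow> bool" where
  "forces g Q \<longleftrightarrow> (\<forall>F. g \<subseteq>\<^sub>m Some \<circ> F \<longrightarrow> Q F)"

definition forceable :: "(('a \<Rightarrow> 'b) \<Rightarrow> bool) \<Rightarrow> bool" where
  "forceable Q \<longleftrightarrow>
     (\<forall>D. below_continuum D \<longrightarrow> (\<exists>g. countable (dom g) \<and> dom g \<inter> D = {} \<and> forces g Q))"

lemma forces_mono: "forces g Q \<Longrightarrow> (\<And>F. Q F \<Longrightarrow> R F) \<Longrightarrow> forces g R"
  unfolding forces_def by simp

lemma forceable_mono: "forceable Q \<Longrightarrow> (\<And>F. Q F \<Longrightarrow> R F) \<Longrightarrow> forceable R"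
  unfolding forceable_def by (metis forces_mono)

lemma forceable_True: "forceable (\<lambda>F. True)"
  unfolding forceable_def forces_def by (intro allI impI exI[of _ Map.empty]) auto

lemma forceable_conj:
  fixes P Q :: "('a \<Rightarrow> 'b) \<Rightarrow> bool"
  assumes P: "forceable P" and Q: "forceable Q"
  shows "forceable (\<lambda>F. P F \<and> Q F)"
  unfolding forceable_def
proof (intro allI impI)
  fix D :: "'a set" assume D: "below_continuum D"
  obtain g1 where g1: "countable (dom g1)" "dom g1 \<inter> D = {}" "forces g1 P"
    using P D unfolding forceable_def by blast
  have "below_continuum (D \<union> dom g1)"
    using D g1(1) below_continuum_countable by (blast intro: below_continuum_Un)
  then obtain g2 where g2: "countable (dom g2)" "dom g2 \<inter> (D \<union> dom g1) = {}" "forces g2 Q"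
    using Q unfolding forceable_def by blast
  have "dom g1 \<inter> dom g2 = {}" using g2(2) by blast
  then have "g1 \<subseteq>\<^sub>m g1 ++ g2" by (metis map_add_comm map_le_map_add)
  moreover have "g2 \<subseteq>\<^sub>m g1 ++ g2" by (rule map_le_map_add)
  ultimately have "forces (g1 ++ g2) (\<lambda>F. P F \<and> Q F)"
    using g1(3) g2(3) unfolding forces_def by (blast intro: map_le_trans)
  moreover have "countable (dom (g1 ++ g2))" "dom (g1 ++ g2) \<inter> D = {}"
    using g1(1,2) g2(1,2) by auto
  ultimately show "\<exists>g. countable (dom g) \<and> dom g \<inter> D = {} \<and> forces g (\<lambda>F. P F \<and> Q F)"
    by blast
qed

lemma exists_common_extension:
  assumes "\<And>K K'. K \<in> T \<Longrightarrow> K' \<in> T \<Longrightarrow> K \<noteq> K' \<Longrightarrow> dom (g K) \<inter> dom (g K') = {}"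
  shows "\<exists>F. \<forall>K\<in>T. g K \<subseteq>\<^sub>m Some \<circ> F"
proof -
  define F where "F x = the (g (SOME K. K \<in> T \<and> x \<in> dom (g K)) x)" for x
  have "g K x = Some (F x)" if "K \<in> T" "x \<in> dom (g K)" for K x
  proof -
    define K' where "K' = (SOME K. K \<in> T \<and> x \<in> dom (g K))"
    have "K' \<in> T \<and> x \<in> dom (g K')"
      unfolding K'_def by (rule someI[of _ K]) (use that in blast)
    then have "K' = K" using assms that by blast
    then show ?thesis using that unfolding F_def K'_def[symmetric] by auto
  qed
  then show ?thesis unfolding map_le_def by auto
qed

text \<open>Recursion along the well-order \<open>|T|\<close>, whose initial segments have cardinality
  below \<open>|T|\<close>.\<close>
lemma forceable_simultaneously:
  fixes Q :: "'i \<Rightarrow> ('a \<Rightarrow> 'b) \<Rightarrow> bool"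
  assumes T: "|T| \<le>o |UNIV::real set|" and Q: "\<And>K. K \<in> T \<Longrightarrow> forceable (Q K)"
  shows "\<exists>F. \<forall>K\<in>T. Q K F"
proof -
  define r where "r = |T|"
  have wo: "wo_rel r" unfolding r_def wo_rel_def by (rule card_of_Well_order)
  have Field_r: "Field r = T" unfolding r_def by (rule Field_card_of)
  define good where "good D K g \<longleftrightarrow> countable (dom g) \<and> dom g \<inter> D = {} \<and> forces g (Q K)"
    for D K and g :: "'a \<Rightarrow> 'b option"
  define committed where "committed f K = (\<Union>j\<in>underS r K. dom (f j))"
    for f :: "'i \<Rightarrow> 'a \<Rightarrow> 'b option" and K
  \<comment> \<open>The fallback \<open>Map.empty\<close> makes every \<open>gs K\<close> countable outright, so bounding the
    committed points needs no induction.\<close>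
  define H where "H f K = (if \<exists>g. good (committed f K) K g
    then SOME g. good (committed f K) K g else Map.empty)" for f K
  define gs where "gs = wo_rel.worec r H"
  have "wo_rel.adm_wo r H"
    unfolding wo_rel.adm_wo_def[OF wo]
  proof (intro allI impI)
    fix f f' :: "'i \<Rightarrow> 'a \<Rightarrow> 'b option" and K
    assume "\<forall>j\<in>underS r K. f j = f' j"
    then have "committed f K = committed f' K" unfolding committed_def by simp
    then show "H f K = H f' K" unfolding H_def by (simp only:)
  qed
  then have "gs = H gs" unfolding gs_def by (rule wo_rel.worec_fixpoint[OF wo])
  then have fix_gs: "gs K = H gs K" for K by (rule fun_cong)
  have countable_gs: "countable (dom (gs K))" for K
    using fix_gs[of K] someI_ex[of "good (committed gs K) K"]
    unfolding H_def good_def by (cases "\<exists>g. good (committed gs K) K g") auto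
  have good_gs: "good (committed gs K) K (gs K)" if K: "K \<in> T" for K
  proof -
    have "|underS r K| <o r"
      using card_of_underS[of r K] K Field_r card_of_Card_order unfolding r_def by blast
    then have "below_continuum (underS r K)"
      using T unfolding r_def below_continuum_def by (rule ordLess_ordLeq_trans)
    then have "below_continuum (committed gs K)"
      unfolding committed_def using countable_gs by (rule below_continuum_UN)
    then have "\<exists>g. good (committed gs K) K g"
      using Q[OF K] unfolding forceable_def good_def by blast
    then show ?thesis unfolding fix_gs[of K] H_def by (simp add: someI_ex)
  qed
  have "dom (gs K) \<inter> dom (gs K') = {}" if "K \<in> T" "K' \<in> T" "K \<noteq> K'" for K K'
  proof -
    have "K \<in> underS r K' \<or> K' \<in> underS r K"
      using wo_rel.TOTALS[OF wo] that Field_r unfolding underS_def by auto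
    then show ?thesis using good_gs that unfolding good_def committed_def by blast
  qed
  then obtain F where "\<forall>K\<in>T. gs K \<subseteq>\<^sub>m Some \<circ> F" using exists_common_extension by blast
  then have "\<forall>K\<in>T. Q K F" using good_gs unfolding good_def forces_def by blast
  then show ?thesis by blast
qed

section \<open>Construction of the function\<close>

definition hits_closed_over_intervals :: "(real \<Rightarrow> real) \<Rightarrow> bool" where
  "hits_closed_over_intervals F \<longleftrightarrow>
     (\<forall>K a b. closed K \<and> a < b \<and> {a..b} \<subseteq> fst ` K \<longrightarrow> K \<inter> graph_of F \<noteq> {})"

definition breaks_shift :: "(real \<Rightarrow> real) \<Rightarrow> (real \<Rightarrow> real) \<Rightarrow> bool" where
  "breaks_shift F \<psi> \<longleftrightarrow>
     (\<exists>x0 xs. xs \<longlonglongrightarrow> x0 \<and> F x0 = 0 \<and> F (\<psi> x0) = 0 \<and>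
        (\<forall>n. F (xs n) = 0 \<and> F (\<psi> (xs n)) = 1))"

lemma forceable_hits:
  fixes K :: "(real \<times> real) set"
  assumes "a < b" "{a..b} \<subseteq> fst ` K"
  shows "forceable (\<lambda>F. K \<inter> graph_of F \<noteq> {})"
  unfolding forceable_def
proof (intro allI impI)
  fix D :: "real set" assume "below_continuum D"
  then have "\<not> {a<..<b} \<subseteq> D"
    using open_subset_below_continuum[of "{a<..<b}" D] assms(1) by auto
  then obtain x where x: "x \<in> {a<..<b}" "x \<notin> D" by blast
  then have "x \<in> fst ` K" using assms(2) by auto
  then obtain y where "(x, y) \<in> K" by force
  then have "forces [x \<mapsto> y] (\<lambda>F. K \<inter> graph_of F \<noteq> {})"
    unfolding forces_def graph_of_def map_le_def by force
  then show "\<exists>g. countable (dom g) \<and> dom g \<inter> D = {} \<and>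
      forces g (\<lambda>F. K \<inter> graph_of F \<noteq> {})"
    using x(2) by (intro exI[of _ "[x \<mapsto> y]"]) auto
qed

lemma forceable_breaks_shift:
  fixes \<psi> :: "real \<Rightarrow> real"
  assumes cont: "continuous_on UNIV \<psi>" and inj: "inj \<psi>" and nid: "\<psi> \<noteq> id"
  shows "forceable (\<lambda>F. breaks_shift F \<psi>)"
  unfolding forceable_def
proof (intro allI impI)
  fix D :: "real set" assume D: "below_continuum D"
  define E where "E = D \<union> \<psi> -` D"
  have E: "below_continuum E"
    unfolding E_def using D inj by (intro below_continuum_Un below_continuum_vimage)
  have "open {x. \<psi> x \<noteq> x}" by (rule open_Collect_neq[OF cont continuous_on_id])
  moreover have "{x. \<psi> x \<noteq> x} \<noteq> {}" using nid by auto
  ultimately obtain x0 where x0: "\<psi> x0 \<noteq> x0" "x0 \<notin> E"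
    using open_subset_below_continuum[OF _ E] by blast
  obtain U V where UV: "open U" "open V" "x0 \<in> U" "\<psi> x0 \<in> V" "U \<inter> V = {}"
    using separation_t2[of x0 "\<psi> x0"] x0(1) by auto
  define W where "W = U \<inter> \<psi> -` V"
  have "open W" "x0 \<in> W" unfolding W_def using UV cont by (auto intro: open_Int open_vimage)
  then have "x0 islimpt (W - E)" using E by (rule islimpt_diff_below_continuum)
  then obtain xs where xs: "\<And>n. xs n \<in> W - E - {x0}" "xs \<longlonglongrightarrow> x0"
    unfolding islimpt_sequential by blast
  define A0 where "A0 = {x0, \<psi> x0} \<union> range xs"
  define A1 where "A1 = \<psi> ` range xs"
  have "\<psi> (xs n) \<notin> A0" for n
  proof -
    have "\<psi> (xs n) \<in> V" "A0 - {\<psi> x0} \<subseteq> U"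
      using xs(1) UV(3) unfolding A0_def W_def by auto
    moreover have "\<psi> (xs n) \<noteq> \<psi> x0" using xs(1)[of n] inj by (auto dest: injD)
    ultimately show ?thesis using UV(5) by blast
  qed
  then have disj: "A0 \<inter> A1 = {}" unfolding A1_def by blast
  define g where "g z = (if z \<in> A1 then Some 1 else if z \<in> A0 then Some (0::real) else None)"
    for z
  have dom_g: "dom g = A0 \<union> A1" unfolding g_def dom_def by auto
  then have "countable (dom g)" "dom g \<inter> D = {}"
    using x0(2) xs(1) unfolding A0_def A1_def E_def by auto
  moreover have "forces g (\<lambda>F. breaks_shift F \<psi>)"
    unfolding forces_def
  proof (intro allI impI)
    fix F assume "g \<subseteq>\<^sub>m Some \<circ> F"
    then have F: "g z = Some (F z)" if "z \<in> A0 \<union> A1" for z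
      using that \<open>dom g = A0 \<union> A1\<close> unfolding map_le_def by auto
    have "F z = 1" if "z \<in> A1" for z
      using F[of z] that by (simp add: g_def)
    moreover have "F z = 0" if "z \<in> A0" for z
      using F[of z] that disj by (auto simp: g_def split: if_splits)
    ultimately show "breaks_shift F \<psi>"
      unfolding breaks_shift_def A0_def A1_def using xs(2)
      by (intro exI[of _ x0] exI[of _ xs]) auto
  qed
  ultimately show "\<exists>g. countable (dom g) \<and> dom g \<inter> D = {} \<and>
      forces g (\<lambda>F. breaks_shift F \<psi>)"
    by blast
qed

lemma graph_of_eq_range: "graph_of F = range (\<lambda>x. (x, F x))"
  unfolding graph_of_def by auto

lemma pair_in_graph_of [simp]: "(x, F x) \<in> graph_of F"
  unfolding graph_of_def by blast

lemma closed_graph_of: "continuous_on UNIV \<psi> \<Longrightarrow> closed (graph_of \<psi>)"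
proof -
  assume cont: "continuous_on UNIV \<psi>"
  have "graph_of \<psi> = {z. snd z = \<psi> (fst z)}" unfolding graph_of_def by force
  moreover have "closed {z::real \<times> real. snd z = \<psi> (fst z)}"
    by (intro closed_Collect_eq continuous_intros continuous_on_compose2[OF cont]) auto
  ultimately show ?thesis by simp
qed

lemma graph_of_inject: "graph_of \<phi> = graph_of \<psi> \<Longrightarrow> \<phi> = \<psi>"
  unfolding graph_of_def by (auto simp: fun_eq_iff set_eq_iff)

lemma exists_hits_closed_breaks_shifts:
  "\<exists>F. hits_closed_over_intervals F \<and>
       (\<forall>\<psi>. continuous_on UNIV \<psi> \<and> inj \<psi> \<and> \<psi> \<noteq> id \<longrightarrow> breaks_shift F \<psi>)"
proof -
  define Q where "Q K F \<longleftrightarrow>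
      ((\<exists>a b. a < b \<and> {a..b} \<subseteq> fst ` K) \<longrightarrow> K \<inter> graph_of F \<noteq> {}) \<and>
      (\<forall>\<psi>. continuous_on UNIV \<psi> \<and> inj \<psi> \<and> \<psi> \<noteq> id \<and> K = graph_of \<psi> \<longrightarrow> breaks_shift F \<psi>)"
    for K F
  have forceable_Q: "forceable (Q K)" for K
  proof -
    have "forceable (\<lambda>F. (\<exists>a b. a < b \<and> {a..b} \<subseteq> fst ` K) \<longrightarrow> K \<inter> graph_of F \<noteq> {})"
    proof (cases "\<exists>a b. a < b \<and> {a..b} \<subseteq> fst ` K")
      case True
      then obtain a b where "a < b" "{a..b} \<subseteq> fst ` K" by blast
      then show ?thesis by (rule forceable_mono[OF forceable_hits]) simp
    next
      case False
      then show ?thesis by (intro forceable_mono[OF forceable_True]) blast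
    qed
    moreover have "forceable (\<lambda>F. \<forall>\<psi>.
        continuous_on UNIV \<psi> \<and> inj \<psi> \<and> \<psi> \<noteq> id \<and> K = graph_of \<psi> \<longrightarrow> breaks_shift F \<psi>)"
    proof (cases "\<exists>\<psi>. continuous_on UNIV \<psi> \<and> inj \<psi> \<and> \<psi> \<noteq> id \<and> K = graph_of \<psi>")
      case True
      then obtain \<psi> where \<psi>: "continuous_on UNIV \<psi>" "inj \<psi>" "\<psi> \<noteq> id" "K = graph_of \<psi>"
        by blast
      show ?thesis
        by (rule forceable_mono[OF forceable_breaks_shift[OF \<psi>(1-3)]])
          (use \<psi>(4) graph_of_inject in blast)
    next
      case False
      then show ?thesis by (intro forceable_mono[OF forceable_True]) blast
    qed
    ultimately show ?thesis unfolding Q_def by (rule forceable_conj)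
  qed
  then obtain F where F: "\<And>K. closed K \<Longrightarrow> Q K F"
    using forceable_simultaneously[of "{K. closed K}" Q,
        OF card_closed_sets_le_continuum forceable_Q]
    by auto
  have "hits_closed_over_intervals F"
    unfolding hits_closed_over_intervals_def using F unfolding Q_def by blast
  moreover have "breaks_shift F \<psi>" if "continuous_on UNIV \<psi>" "inj \<psi>" "\<psi> \<noteq> id" for \<psi>
    using F[OF closed_graph_of[OF that(1)]] that unfolding Q_def by blast
  ultimately show ?thesis by blast
qed

section \<open>Connectedness and density of the graph\<close>

lemma not_connected_disjoint_open_cover:
  fixes S :: "'a::metric_space set"
  assumes "\<not> connected S"
  obtains U V
  where "open U" "open V" "U \<inter> V = {}" "S \<subseteq> U \<union> V" "U \<inter> S \<noteq> {}" "V \<inter> S \<noteq> {}"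
proof -
  have "\<exists>C1 C2. C1 \<union> C2 = S \<and> C1 \<noteq> {} \<and> C2 \<noteq> {} \<and> separatedin euclidean C1 C2"
    using connectedin_eq_not_separated[of euclidean S] assms by simp
  then obtain C1 C2 where C: "C1 \<union> C2 = S" "C1 \<noteq> {}" "C2 \<noteq> {}" "separatedin euclidean C1 C2"
    by blast
  obtain U V where "openin euclidean U" "openin euclidean V" "C1 \<subseteq> U" "C2 \<subseteq> V" "disjnt U V"
    using metrizable_space_separation[OF metrizable_space_euclidean C(4)] by blast
  moreover from this C have "S \<subseteq> U \<union> V" "U \<inter> S \<noteq> {}" "V \<inter> S \<noteq> {}"
    by blast+
  ultimately show thesis
    using that[of U V] by (simp add: disjnt_def)
qed

lemma fst_connected_closed_subsingleton:
  assumes hits: "hits_closed_over_intervals F" and I: "is_interval I"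
    and C: "closed C" "connected C" "C \<inter> (\<lambda>x. (x, F x)) ` I = {}"
    and u: "u \<in> fst ` C \<inter> I" and v: "v \<in> fst ` C \<inter> I"
  shows "u = v"
proof (rule ccontr)
  assume "u \<noteq> v"
  define lo where "lo = min u v"
  define hi where "hi = max u v"
  have "lo < hi" using \<open>u \<noteq> v\<close> unfolding lo_def hi_def by linarith
  have ends: "lo \<in> fst ` C \<inter> I" "hi \<in> fst ` C \<inter> I"
    using u v unfolding lo_def hi_def by (simp_all add: min_def max_def)
  have "is_interval (fst ` C)"
    using C(2) by (simp add: is_interval_connected_1 connected_continuous_image continuous_on_fst)
  then have sub: "{lo..hi} \<subseteq> fst ` C" "{lo..hi} \<subseteq> I"
    using I ends by (auto intro: mem_is_interval_1_I[where a = lo and c = hi])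
  define C0 where "C0 = C \<inter> ({lo..hi} \<times> UNIV)"
  have "closed C0" unfolding C0_def using C(1) by (intro closed_Int closed_Times) auto
  moreover have "{lo..hi} \<subseteq> fst ` C0"
  proof
    fix t assume t: "t \<in> {lo..hi}"
    then obtain z where "z \<in> C" "fst z = t" using sub(1) by blast
    with t show "t \<in> fst ` C0"
      unfolding C0_def by (intro image_eqI[of _ _ z]) (auto simp: mem_Times_iff)
  qed
  ultimately have "C0 \<inter> graph_of F \<noteq> {}"
    using hits \<open>lo < hi\<close> unfolding hits_closed_over_intervals_def by blast
  then obtain t where "(t, F t) \<in> C" "t \<in> {lo..hi}"
    unfolding C0_def graph_of_def by blast
  then show False using C(3) sub(2) by blast
qed

lemma connected_component_staircase:
  fixes F :: "real \<Rightarrow> real"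
  assumes I: "is_interval I" and abx: "a \<in> I" "b \<in> I" "x0 \<in> I"
    and C: "C \<inter> (\<lambda>x. (x, F x)) ` I = {}" "\<And>z. z \<in> C \<Longrightarrow> fst z \<in> I \<Longrightarrow> fst z = x0"
  shows "connected_component (- C) (a, F a) (b, F b)"
proof -
  define P1 where "P1 = (\<lambda>s. (a, s)) ` closed_segment (F a) (F x0)"
  define P2 where "P2 = (\<lambda>t. (t, F x0)) ` closed_segment a b"
  define P3 where "P3 = (\<lambda>s. (b, s)) ` closed_segment (F b) (F x0)"
  have "connected P1" "connected P2" "connected P3"
    unfolding P1_def P2_def P3_def
    by (intro connected_continuous_image connected_segment continuous_intros)+
  moreover have "(a, F x0) \<in> P1 \<inter> P2" "(b, F x0) \<in> P2 \<inter> P3"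
    unfolding P1_def P2_def P3_def by auto
  ultimately have "connected (P1 \<union> P2 \<union> P3)"
    by (intro connected_Un) auto
  moreover have "(a, F a) \<in> P1" "(b, F b) \<in> P3" unfolding P1_def P3_def by auto
  moreover have "z \<notin> C" if "z \<in> P1 \<union> P2 \<union> P3" for z
  proof -
    have "closed_segment a b \<subseteq> I"
      using I abx by (intro closed_segment_subset) (auto simp: is_interval_convex_1)
    then have "fst z \<in> I \<and> (fst z = x0 \<longrightarrow> z = (x0, F x0))"
      using that abx unfolding P1_def P2_def P3_def by auto
    then show ?thesis using C abx(3) by blast
  qed
  ultimately show ?thesis unfolding connected_component_def by blast
qed

lemma connected_graph_over_interval:
  assumes hits: "hits_closed_over_intervals F" and I: "is_interval I"
  shows "connected ((\<lambda>x. (x, F x)) ` I)" (is "connected ?G")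
proof (rule ccontr)
  assume "\<not> connected ?G"
  then obtain U V where UV: "open U" "open V" "U \<inter> V = {}" "?G \<subseteq> U \<union> V"
    "U \<inter> ?G \<noteq> {}" "V \<inter> ?G \<noteq> {}"
    by (rule not_connected_disjoint_open_cover)
  then obtain a b where ab: "a \<in> I" "b \<in> I" "(a, F a) \<in> U" "(b, F b) \<in> V" by blast
  define K where "K = - (U \<union> V)"
  have "closed K" unfolding K_def using UV(1,2) by blast
  have "\<not> connected_component (- K) (a, F a) (b, F b)"
  proof
    assume "connected_component (- K) (a, F a) (b, F b)"
    then obtain T where "connected T" "T \<subseteq> U \<union> V" "(a, F a) \<in> T" "(b, F b) \<in> T"
      unfolding connected_component_def K_def by auto
    then show False using connectedD[OF _ UV(1,2)] UV(3) ab(3,4) by blast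
  qed
  then obtain C where C: "C \<in> components K" "\<not> connected_component (- C) (a, F a) (b, F b)"
    using separation_by_component_closed_pointwise[OF \<open>closed K\<close>] by blast
  have "closed C" "connected C" "C \<inter> ?G = {}"
    using closed_components[OF \<open>closed K\<close> C(1)] in_components_connected[OF C(1)]
      in_components_subset[OF C(1)] UV(4) unfolding K_def by auto
  note subsingleton = fst_connected_closed_subsingleton[OF hits I this]
  obtain x0 where "x0 \<in> I" "\<And>z. z \<in> C \<Longrightarrow> fst z \<in> I \<Longrightarrow> fst z = x0"
  proof (cases "\<exists>z\<in>C. fst z \<in> I")
    case True
    then obtain z0 where "z0 \<in> C" "fst z0 \<in> I" by blast
    then show thesis using subsingleton by (intro that[of "fst z0"]) auto
  next
    case False
    then show thesis using ab(1) by (intro that[of a]) auto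
  qed
  then show False
    using connected_component_staircase[OF I ab(1,2) _ \<open>C \<inter> ?G = {}\<close>] C(2) by blast
qed

lemma dense_graph:
  assumes hits: "hits_closed_over_intervals F"
  shows "closure (graph_of F) = UNIV"
proof -
  have "\<exists>y\<in>graph_of F. dist y z < e" if "e > 0" for z :: "real \<times> real" and e
  proof -
    have "{fst z - e/2 .. fst z + e/2} \<subseteq> fst ` cball z (e/2)"
    proof
      fix t assume t: "t \<in> {fst z - e/2 .. fst z + e/2}"
      have "dist z (t, snd z) = \<bar>fst z - t\<bar>"
        by (cases z) (simp add: dist_Pair_Pair dist_real_def)
      also have "\<dots> \<le> e/2" using t by (simp only: atLeastAtMost_iff abs_le_iff) linarith
      finally have "(t, snd z) \<in> cball z (e/2)" by simp
      then show "t \<in> fst ` cball z (e/2)" by force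
    qed
    moreover have "fst z - e/2 < fst z + e/2" using \<open>e > 0\<close> by simp
    ultimately have "cball z (e/2) \<inter> graph_of F \<noteq> {}"
      using hits unfolding hits_closed_over_intervals_def by blast
    then obtain y where "y \<in> graph_of F" "dist z y \<le> e/2" by auto
    then show ?thesis using \<open>e > 0\<close> by (intro bexI[of _ y]) (auto simp: dist_commute)
  qed
  then have "z \<in> closure (graph_of F)" for z
    unfolding closure_approachable by blast
  then show ?thesis by blast
qed

section \<open>Rigidity of the graph\<close>

lemma inj_interval_images_closed_segment:
  fixes \<psi> :: "real \<Rightarrow> real"
  assumes inj: "inj \<psi>" and iv: "\<And>c d. c < d \<Longrightarrow> is_interval (\<psi> ` {c<..<d})"
    and v: "v \<in> closed_segment (\<psi> a) (\<psi> b)"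
  shows "\<exists>t\<in>closed_segment a b. \<psi> t = v"
proof -
  define lo where "lo = min a b"
  define hi where "hi = max a b"
  have hit: "\<exists>t\<in>{c<..<d}. \<psi> t = v" if "c < lo" "hi < d" for c d
  proof -
    have "c < a" "a < d" "c < b" "b < d" "c < d"
      using that unfolding lo_def hi_def by simp_all
    then have "\<psi> a \<in> \<psi> ` {c<..<d}" "\<psi> b \<in> \<psi> ` {c<..<d}" "convex (\<psi> ` {c<..<d})"
      using iv[of c d] by (simp_all add: is_interval_convex_1)
    then have "closed_segment (\<psi> a) (\<psi> b) \<subseteq> \<psi> ` {c<..<d}"
      by (rule closed_segment_subset)
    then show ?thesis using v by auto
  qed
  obtain t where t: "lo - 1 < t" "t < hi + 1" "\<psi> t = v"
    using hit[of "lo - 1" "hi + 1"] by auto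
  have "lo \<le> t"
  proof (rule ccontr)
    assume "\<not> lo \<le> t"
    then obtain t' where "(t + lo) / 2 < t'" "\<psi> t' = \<psi> t"
      using hit[of "(t + lo) / 2" "hi + 1"] t(3) by auto
    moreover from this have "t' = t" using inj by (simp add: inj_eq)
    ultimately show False using \<open>\<not> lo \<le> t\<close> by (simp add: field_simps)
  qed
  moreover have "t \<le> hi"
  proof (rule ccontr)
    assume "\<not> t \<le> hi"
    then obtain t' where "t' < (t + hi) / 2" "\<psi> t' = \<psi> t"
      using hit[of "lo - 1" "(t + hi) / 2"] t(3) by auto
    moreover from this have "t' = t" using inj by (simp add: inj_eq)
    ultimately show False using \<open>\<not> t \<le> hi\<close> by (simp add: field_simps)
  qed
  moreover have "closed_segment a b = {lo..hi}"
    unfolding lo_def hi_def by (simp add: closed_segment_eq_real_ivl min_def max_def)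
  ultimately show ?thesis using t(3) by auto
qed

lemma inj_interval_images_continuous:
  fixes \<psi> :: "real \<Rightarrow> real"
  assumes inj: "inj \<psi>" and iv: "\<And>c d. c < d \<Longrightarrow> is_interval (\<psi> ` {c<..<d})"
  shows "continuous_on UNIV \<psi>"
  unfolding continuous_on_iff
proof (intro ballI allI impI)
  fix x0 e :: real assume "e > 0"
  define T where "T = \<psi> -` {\<psi> x0 - e, \<psi> x0 + e}"
  have "finite T" unfolding T_def by (rule finite_vimageI) (simp_all add: inj)
  then have "open (- T)" by (simp add: open_Compl finite_imp_closed)
  moreover have "x0 \<in> - T" using \<open>e > 0\<close> unfolding T_def by simp
  ultimately obtain d where "d > 0" "ball x0 d \<subseteq> - T"
    unfolding open_contains_ball by blast
  moreover have "dist (\<psi> x) (\<psi> x0) < e" if "dist x x0 < d" for x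
  proof (rule ccontr)
    assume far: "\<not> dist (\<psi> x) (\<psi> x0) < e"
    obtain v where "v \<in> {\<psi> x0 - e, \<psi> x0 + e}" "v \<in> closed_segment (\<psi> x0) (\<psi> x)"
    proof (cases "\<psi> x0 \<le> \<psi> x")
      case True
      with far have "\<psi> x0 + e \<in> closed_segment (\<psi> x0) (\<psi> x)"
        using \<open>e > 0\<close> by (simp add: closed_segment_eq_real_ivl dist_real_def)
      then show thesis by (intro that) simp_all
    next
      case False
      with far have "\<psi> x0 - e \<in> closed_segment (\<psi> x0) (\<psi> x)"
        using \<open>e > 0\<close> by (simp add: closed_segment_eq_real_ivl dist_real_def)
      then show thesis by (intro that) simp_all
    qed
    then obtain t where "t \<in> closed_segment x0 x" "t \<in> T"
      using inj_interval_images_closed_segment[OF inj iv] unfolding T_def by blast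
    moreover have "x0 \<in> ball x0 d" "x \<in> ball x0 d"
      using that \<open>d > 0\<close> by (simp_all add: dist_commute)
    then have "closed_segment x0 x \<subseteq> ball x0 d"
      by (intro closed_segment_subset convex_ball)
    ultimately show False using \<open>ball x0 d \<subseteq> - T\<close> by blast
  qed
  ultimately show "\<exists>d>0. \<forall>x\<in>UNIV. dist x x0 < d \<longrightarrow> dist (\<psi> x) (\<psi> x0) < e" by blast
qed

lemma graph_self_embedding_shift:
  fixes F :: "real \<Rightarrow> real"
  assumes conn: "\<And>I. is_interval I \<Longrightarrow> connected ((\<lambda>x. (x, F x)) ` I)"
    and h: "continuous_on (graph_of F) h" "inj_on h (graph_of F)" "h ` graph_of F \<subseteq> graph_of F"
  obtains \<psi> where "continuous_on UNIV \<psi>" "inj \<psi>" "\<And>x. h (x, F x) = (\<psi> x, F (\<psi> x))"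
proof -
  define \<psi> where "\<psi> x = fst (h (x, F x))" for x
  have h_\<psi>: "h (x, F x) = (\<psi> x, F (\<psi> x))" for x
  proof -
    have "h (x, F x) \<in> graph_of F" using h(3) by auto
    then obtain y where "h (x, F x) = (y, F y)" unfolding graph_of_def by blast
    then show ?thesis unfolding \<psi>_def by simp
  qed
  have "inj \<psi>"
  proof (rule injI)
    fix x y assume "\<psi> x = \<psi> y"
    then have "h (x, F x) = h (y, F y)" using h_\<psi> by simp
    then show "x = y" using inj_onD[OF h(2)] by auto
  qed
  moreover have "is_interval (\<psi> ` {c<..<d})" for c d
  proof -
    have "(\<lambda>x. (x, F x)) ` {c<..<d} \<subseteq> graph_of F" by auto
    moreover have "connected ((\<lambda>x. (x, F x)) ` {c<..<d})"
      by (rule conn) (simp add: is_interval_convex_1)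
    ultimately have "connected (h ` (\<lambda>x. (x, F x)) ` {c<..<d})"
      using connected_continuous_image continuous_on_subset[OF h(1)] by blast
    then have "connected (fst ` h ` (\<lambda>x. (x, F x)) ` {c<..<d})"
      by (rule connected_continuous_image[OF continuous_on_fst[OF continuous_on_id]])
    then show ?thesis unfolding \<psi>_def image_image by (simp add: is_interval_connected_1)
  qed
  ultimately show thesis
    using that inj_interval_images_continuous h_\<psi> by blast
qed

lemma breaks_shift_not_continuous:
  assumes "breaks_shift F \<psi>" and h: "\<And>x. h (x, F x) = (\<psi> x, F (\<psi> x))"
  shows "\<not> continuous_on (graph_of F) h"
proof
  assume cont: "continuous_on (graph_of F) h"
  obtain x0 xs where xs: "xs \<longlonglongrightarrow> x0" "F x0 = 0" "F (\<psi> x0) = 0"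
    "\<And>n. F (xs n) = 0" "\<And>n. F (\<psi> (xs n)) = 1"
    using assms(1) unfolding breaks_shift_def by blast
  have "(\<lambda>n. (xs n, F (xs n))) \<longlonglongrightarrow> (x0, F x0)"
    using tendsto_Pair[OF xs(1) tendsto_const[of 0]] xs(2,4) by simp
  then have "(\<lambda>n. h (xs n, F (xs n))) \<longlonglongrightarrow> h (x0, F x0)"
    by (rule continuous_on_tendsto_compose[OF cont]) simp_all
  then have "(\<lambda>n. snd (h (xs n, F (xs n)))) \<longlonglongrightarrow> snd (h (x0, F x0))"
    by (rule tendsto_snd)
  then have "(\<lambda>n. 1::real) \<longlonglongrightarrow> 0" using h xs(3,5) by simp
  then show False using LIMSEQ_unique[OF tendsto_const] by fastforce
qed

theorem corollary3:
  shows "\<exists>F :: real \<Rightarrow> real.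
           connected (graph_of F) \<and>
           closure (graph_of F) = UNIV \<and>
           (\<forall>S. S \<subset> graph_of F \<longrightarrow> \<not> (graph_of F homeomorphic S))"
proof -
  obtain F where hits: "hits_closed_over_intervals F"
    and breaks: "\<And>\<psi>. continuous_on UNIV \<psi> \<Longrightarrow> inj \<psi> \<Longrightarrow> \<psi> \<noteq> id \<Longrightarrow> breaks_shift F \<psi>"
    using exists_hits_closed_breaks_shifts by blast
  note conn = connected_graph_over_interval[OF hits]
  have "\<not> graph_of F homeomorphic S" if S: "S \<subset> graph_of F" for S
  proof
    assume "graph_of F homeomorphic S"
    then obtain h k where "homeomorphism (graph_of F) S h k" unfolding homeomorphic_def by blast
    then have h: "continuous_on (graph_of F) h" "inj_on h (graph_of F)" "h ` graph_of F = S"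
      unfolding homeomorphism_def by (auto intro: inj_on_inverseI)
    then obtain \<psi>
      where \<psi>: "continuous_on UNIV \<psi>" "inj \<psi>" "\<And>x. h (x, F x) = (\<psi> x, F (\<psi> x))"
      using graph_self_embedding_shift[OF conn] S by blast
    have "\<psi> \<noteq> id"
    proof
      assume "\<psi> = id"
      then have "h ` graph_of F = graph_of F"
        using \<psi>(3) unfolding graph_of_eq_range image_image by simp
      then show False using h(3) S by blast
    qed
    then show False using breaks_shift_not_continuous[OF breaks[OF \<psi>(1,2)] \<psi>(3)] h(1) by blast
  qed
  moreover have "connected (graph_of F)" using conn[of UNIV] by (simp add: graph_of_eq_range)
  ultimately show ?thesis using dense_graph[OF hits] by blast
qed

end
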